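(* Let $\Gamma$ be a non-empty set and $1<p\le 2$. Then $FBL[\ell_p(\Gamma)]$ contains a closed subspace isomorphic to $\ell_1(\Gamma)$.
   Context: For a real Banach space $E$ with dual $E^*$ and closed unit ball $B_E$, let $H[E]$ be the vector space of all positively homogeneous functions $f:E^*\to\mathbb R$ ($f(\lambda x^* )=\lambda f(x^* )$ for $\lambda>0$). For $f\in H[E]$ put $\|f\|_{FBL[E]}:=\sup\{\sum_{k=1}^n|f(x_k^* )| : n\in\mathbb N,\ x_1^*,\dots,x_n^*\in E^*,\ \sup_{x\in B_E}\sum_{k=1}^n|x_k^*(x)|\le 1\}$. $H_0[E]:=\{f\in H[E]:\|f\|_{FBL[E]}<\infty\}$ is a Banach lattice with this norm and pointwise order/operations. For $x\in E$ let $\delta_x(x^* )=x^*(x)$. $FBL[E]$ is the closed sublattice of $H_0[E]$ generated by $\{\delta_x:x\in E\}$. *)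

theory Defs
  imports "HOL-Analysis.Analysis"
begin

text \<open>Sequence spaces over an index type 'g (the index set Gamma is the whole
  type 'g, hence automatically non-empty). Vector operations are pointwise.\<close>

definition lp :: "real \<Rightarrow> ('g \<Rightarrow> real) set" where
  "lp p = {x. (\<lambda>\<gamma>. \<bar>x \<gamma>\<bar> powr p) summable_on UNIV}"

definition lp_norm :: "real \<Rightarrow> ('g \<Rightarrow> real) \<Rightarrow> real" where
  "lp_norm p x = (\<Sum>\<^sub>\<infinity>\<gamma>. \<bar>x \<gamma>\<bar> powr p) powr (1 / p)"

definition l1 :: "('g \<Rightarrow> real) set" where
  "l1 = {x. (\<lambda>\<gamma>. \<bar>x \<gamma>\<bar>) summable_on UNIV}"

definition l1_norm :: "('g \<Rightarrow> real) \<Rightarrow> real" where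
  "l1_norm x = (\<Sum>\<^sub>\<infinity>\<gamma>. \<bar>x \<gamma>\<bar>)"

text \<open>Dual of a normed space given by a carrier V of functions (pointwise
  operations) and a norm N: bounded linear functionals on V, made extensional
  (value 0 outside V) so that they are identified with their restriction to V.\<close>

definition dual_space :: "('g \<Rightarrow> real) set \<Rightarrow> (('g \<Rightarrow> real) \<Rightarrow> real) \<Rightarrow> ((('g \<Rightarrow> real) \<Rightarrow> real) set)" where
  "dual_space V N = {\<phi>.
     (\<forall>x\<in>V. \<forall>y\<in>V. \<phi> (\<lambda>\<gamma>. x \<gamma> + y \<gamma>) = \<phi> x + \<phi> y) \<and>
     (\<forall>x\<in>V. \<forall>c. \<phi> (\<lambda>\<gamma>. c * x \<gamma>) = c * \<phi> x) \<and>
     (\<exists>C. \<forall>x\<in>V. \<bar>\<phi> x\<bar> \<le> C * N x) \<and>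
     (\<forall>x. x \<notin> V \<longrightarrow> \<phi> x = 0)}"

definition H_space :: "('g \<Rightarrow> real) set \<Rightarrow> (('g \<Rightarrow> real) \<Rightarrow> real) \<Rightarrow> (((('g \<Rightarrow> real) \<Rightarrow> real) \<Rightarrow> real) set)" where
  "H_space V N = {f.
     (\<forall>\<phi>\<in>dual_space V N. \<forall>t>0. f (\<lambda>x. t * \<phi> x) = t * f \<phi>) \<and>
     (\<forall>\<phi>. \<phi> \<notin> dual_space V N \<longrightarrow> f \<phi> = 0)}"

definition fbl_sums :: "('g \<Rightarrow> real) set \<Rightarrow> (('g \<Rightarrow> real) \<Rightarrow> real) \<Rightarrow> ((('g \<Rightarrow> real) \<Rightarrow> real) \<Rightarrow> real) \<Rightarrow> real set" where
  "fbl_sums V N f = {(\<Sum>k<(n::nat). \<bar>f (xs k)\<bar>) | n xs.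
       (\<forall>k<n. xs k \<in> dual_space V N) \<and>
       (\<forall>x\<in>V. N x \<le> 1 \<longrightarrow> (\<Sum>k<n. \<bar>xs k x\<bar>) \<le> 1)}"

definition fbl_norm :: "('g \<Rightarrow> real) set \<Rightarrow> (('g \<Rightarrow> real) \<Rightarrow> real) \<Rightarrow> ((('g \<Rightarrow> real) \<Rightarrow> real) \<Rightarrow> real) \<Rightarrow> real" where
  "fbl_norm V N f = Sup (fbl_sums V N f)"

definition H0_space :: "('g \<Rightarrow> real) set \<Rightarrow> (('g \<Rightarrow> real) \<Rightarrow> real) \<Rightarrow> (((('g \<Rightarrow> real) \<Rightarrow> real) \<Rightarrow> real) set)" where
  "H0_space V N = {f \<in> H_space V N. bdd_above (fbl_sums V N f)}"

definition delta_fun :: "('g \<Rightarrow> real) set \<Rightarrow> (('g \<Rightarrow> real) \<Rightarrow> real) \<Rightarrow> ('g \<Rightarrow> real) \<Rightarrow> (('g \<Rightarrow> real) \<Rightarrow> real) \<Rightarrow> real" where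
  "delta_fun V N x = (\<lambda>\<phi>. if \<phi> \<in> dual_space V N then \<phi> x else 0)"

definition closed_sublattice :: "('g \<Rightarrow> real) set \<Rightarrow> (('g \<Rightarrow> real) \<Rightarrow> real) \<Rightarrow> (((('g \<Rightarrow> real) \<Rightarrow> real) \<Rightarrow> real) set) \<Rightarrow> bool" where
  "closed_sublattice V N S \<longleftrightarrow>
     S \<subseteq> H0_space V N \<and>
     (\<forall>f\<in>S. \<forall>g\<in>S. (\<lambda>\<phi>. f \<phi> + g \<phi>) \<in> S) \<and>
     (\<forall>f\<in>S. \<forall>c. (\<lambda>\<phi>. c * f \<phi>) \<in> S) \<and>
     (\<forall>f\<in>S. \<forall>g\<in>S. (\<lambda>\<phi>. max (f \<phi>) (g \<phi>)) \<in> S) \<and>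
     (\<forall>u f. (\<forall>n. u n \<in> S) \<longrightarrow> f \<in> H0_space V N \<longrightarrow>
        (\<lambda>n. fbl_norm V N (\<lambda>\<phi>. u n \<phi> - f \<phi>)) \<longlonglongrightarrow> 0 \<longrightarrow> f \<in> S)"

definition FBL :: "('g \<Rightarrow> real) set \<Rightarrow> (('g \<Rightarrow> real) \<Rightarrow> real) \<Rightarrow> (((('g \<Rightarrow> real) \<Rightarrow> real) \<Rightarrow> real) set)" where
  "FBL V N = \<Inter>{S. closed_sublattice V N S \<and> delta_fun V N ` V \<subseteq> S}"

end

theory Submission
  imports Defs
begin

text \<open>The embedding is \<open>T z = \<Sum>\<^sub>g z\<^sub>g \<bar>\<delta>(e\<^sub>g)\<bar>\<close>, evaluated at a functional
  \<open>x\<^sup>*\<close> as \<open>\<Sum>\<^sub>g z\<^sub>g \<bar>x\<^sup>*(e\<^sub>g)\<bar>\<close>. Since an admissible family satisfies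
  \<open>\<Sum>\<^sub>k \<bar>x\<^sub>k\<^sup>*(e\<^sub>g)\<bar> \<le> 1\<close> at every unit vector, \<open>\<parallel>T z\<parallel> \<le> \<parallel>z\<parallel>\<^sub>1\<close>. For the converse, fix
  \<open>n\<close> coordinates and take the \<open>2\<^sup>n\<close> Rademacher functionals \<open>x \<mapsto> 2\<^sup>-\<^sup>n \<Sum> \<epsilon>\<^sub>g x\<^sub>g\<close>, one
  for each sign vector \<open>\<epsilon>\<close>. Orthogonality of the sign vectors and Cauchy-Schwarz bound the sum
  of their moduli by the \<open>\<ell>\<^sub>2\<close>-norm of \<open>x\<close> on these coordinates, which is at most
  \<open>\<parallel>x\<parallel>\<^sub>p\<close> because \<open>p \<le> 2\<close>; so they form an admissible family, on which \<open>T z\<close> sums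
  to \<open>\<bar>\<Sum> z\<^sub>g\<bar>\<close>. Splitting into positive and negative parts gives \<open>\<parallel>z\<parallel>\<^sub>1 \<le> 2 \<parallel>T z\<parallel>\<close>.
  Finitely supported \<open>z\<close> are mapped into the sublattice generated by the evaluations and
  approximate \<open>T z\<close> in norm, so \<open>T\<close> lands in \<open>FBL\<close>; the lower estimate turns a Cauchy
  sequence in the image into a Cauchy sequence in \<open>\<ell>\<^sub>1\<close>, whose pointwise limit is read off
  the coordinate functionals, so the image is closed.\<close>

definition unit_vec :: "'g \<Rightarrow> 'g \<Rightarrow> real" where
  "unit_vec g = (\<lambda>d. if d = g then 1 else 0)"

lemma has_sum_finite_support:
  fixes f :: "'a \<Rightarrow> 'b::topological_comm_monoid_add"
  assumes "finite B" "\<And>x. x \<notin> B \<Longrightarrow> f x = 0"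
  shows "(f has_sum sum f B) UNIV"
  by (rule has_sum_finite_neutralI) (use assms in auto)

lemma has_sum_sum:
  fixes f :: "'i \<Rightarrow> 'a \<Rightarrow> 'b::topological_comm_monoid_add"
  assumes "finite I" "\<And>i. i \<in> I \<Longrightarrow> (f i has_sum s i) A"
  shows "((\<lambda>x. \<Sum>i\<in>I. f i x) has_sum (\<Sum>i\<in>I. s i)) A"
  using assms by (induction I rule: finite_induct) (auto intro: has_sum_add)

section \<open>Sign vectors\<close>

fun sign_vectors :: "'g list \<Rightarrow> ('g \<Rightarrow> real) list" where
  "sign_vectors [] = [(\<lambda>_. 0)]"
| "sign_vectors (a # as) =
     map (\<lambda>e. e(a := 1)) (sign_vectors as) @ map (\<lambda>e. e(a := -1)) (sign_vectors as)"

lemma length_sign_vectors: "length (sign_vectors as) = 2 ^ length as"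
  by (induction as) auto

lemma abs_sign_vectors: "e \<in> set (sign_vectors as) \<Longrightarrow> g \<in> set as \<Longrightarrow> \<bar>e g\<bar> = 1"
  by (induction as arbitrary: e) auto

lemma sum_list_sign_vectors_square:
  assumes "distinct as"
  shows "(\<Sum>e\<leftarrow>sign_vectors as. (c + (\<Sum>g\<in>set as. e g * x g))^2)
    = 2 ^ length as * (c^2 + (\<Sum>g\<in>set as. (x g)^2))"
  using assms
proof (induction as arbitrary: c)
  case Nil
  then show ?case by simp
next
  case (Cons a as)
  have a: "a \<notin> set as" and d: "distinct as" using Cons.prems by auto
  have update: "(\<Sum>g\<in>set (a # as). (e(a := s)) g * x g) = s * x a + (\<Sum>g\<in>set as. e g * x g)" for e s
  proof -
    have "(\<Sum>g\<in>set as. (e(a := s)) g * x g) = (\<Sum>g\<in>set as. e g * x g)"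
      using a by (intro sum.cong) auto
    thus ?thesis using a by simp
  qed
  have shift: "(\<Sum>e\<leftarrow>map (\<lambda>e. e(a := s)) (sign_vectors as). (c + (\<Sum>g\<in>set (a # as). e g * x g))^2)
      = (\<Sum>e\<leftarrow>sign_vectors as. ((c + s * x a) + (\<Sum>g\<in>set as. e g * x g))^2)" for s
    by (simp only: map_map o_def update add.assoc)
  have "(\<Sum>e\<leftarrow>sign_vectors (a # as). (c + (\<Sum>g\<in>set (a # as). e g * x g))^2)
      = (\<Sum>e\<leftarrow>sign_vectors as. ((c + 1 * x a) + (\<Sum>g\<in>set as. e g * x g))^2)
      + (\<Sum>e\<leftarrow>sign_vectors as. ((c + -1 * x a) + (\<Sum>g\<in>set as. e g * x g))^2)"
    by (simp only: sign_vectors.simps map_append sum_list_append shift)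
  also have "\<dots> = 2 ^ length as * ((c + 1 * x a)^2 + (\<Sum>g\<in>set as. (x g)^2))
      + 2 ^ length as * ((c + -1 * x a)^2 + (\<Sum>g\<in>set as. (x g)^2))"
    by (simp only: Cons.IH[OF d])
  also have "\<dots> = 2 ^ length (a # as) * (c^2 + (\<Sum>g\<in>set (a # as). (x g)^2))"
  proof -
    have squares: "(\<Sum>g\<in>set (a # as). (x g)^2) = (x a)^2 + (\<Sum>g\<in>set as. (x g)^2)"
      using a by simp
    have "M * ((c + 1 * y)^2 + Q) + M * ((c + -1 * y)^2 + Q) = (2 * M) * (c^2 + (y^2 + Q))"
      for M y Q :: real
      by (simp add: power2_eq_square algebra_simps)
    thus ?thesis by (simp only: squares length_Cons power_Suc)
  qed
  finally show ?case .
qed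

section \<open>The free Banach lattice norm\<close>

lemma zero_in_fbl_sums: "0 \<in> fbl_sums V N f"
  unfolding fbl_sums_def by (rule CollectI, rule exI[of _ 0]) auto

lemma fbl_sums_le_fbl_norm:
  "bdd_above (fbl_sums V N f) \<Longrightarrow> s \<in> fbl_sums V N f \<Longrightarrow> s \<le> fbl_norm V N f"
  unfolding fbl_norm_def by (rule cSup_upper)

lemma fbl_norm_le: "(\<And>s. s \<in> fbl_sums V N f \<Longrightarrow> s \<le> B) \<Longrightarrow> fbl_norm V N f \<le> B"
  unfolding fbl_norm_def by (intro cSup_least) (use zero_in_fbl_sums[of V N f] in auto)

lemma fbl_norm_nonneg: "bdd_above (fbl_sums V N f) \<Longrightarrow> 0 \<le> fbl_norm V N f"
  using fbl_sums_le_fbl_norm zero_in_fbl_sums by blast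

lemma abs_le_fbl_norm:
  assumes "bdd_above (fbl_sums V N f)" "\<psi> \<in> dual_space V N"
    and "\<And>x. x \<in> V \<Longrightarrow> N x \<le> 1 \<Longrightarrow> \<bar>\<psi> x\<bar> \<le> 1"
  shows "\<bar>f \<psi>\<bar> \<le> fbl_norm V N f"
proof -
  have "(\<Sum>k<(1::nat). \<bar>f ((\<lambda>_. \<psi>) k)\<bar>) \<in> fbl_sums V N f"
    unfolding fbl_sums_def using assms(2,3) by (intro CollectI exI[of _ 1] exI[of _ "\<lambda>_. \<psi>"]) auto
  thus ?thesis using fbl_sums_le_fbl_norm[OF assms(1)] by simp
qed

lemma fbl_norm_dominated:
  assumes f: "bdd_above (fbl_sums V N f)" and g: "bdd_above (fbl_sums V N g)"
    and "0 \<le> a" "0 \<le> b"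
    and dom: "\<And>\<phi>. \<phi> \<in> dual_space V N \<Longrightarrow> \<bar>h \<phi>\<bar> \<le> a * \<bar>f \<phi>\<bar> + b * \<bar>g \<phi>\<bar>"
  shows "bdd_above (fbl_sums V N h)"
    and "fbl_norm V N h \<le> a * fbl_norm V N f + b * fbl_norm V N g"
proof -
  have bound: "s \<le> a * fbl_norm V N f + b * fbl_norm V N g" if s_mem: "s \<in> fbl_sums V N h" for s
  proof -
    obtain n xs where s: "s = (\<Sum>k<(n::nat). \<bar>h (xs k)\<bar>)"
      and xs: "\<forall>k<n. xs k \<in> dual_space V N"
      and adm: "\<forall>x\<in>V. N x \<le> 1 \<longrightarrow> (\<Sum>k<n. \<bar>xs k x\<bar>) \<le> 1"
      using s_mem unfolding fbl_sums_def by blast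
    have "(\<Sum>k<n. \<bar>f (xs k)\<bar>) \<in> fbl_sums V N f" "(\<Sum>k<n. \<bar>g (xs k)\<bar>) \<in> fbl_sums V N g"
      unfolding fbl_sums_def using xs adm by blast+
    hence sums: "(\<Sum>k<n. \<bar>f (xs k)\<bar>) \<le> fbl_norm V N f" "(\<Sum>k<n. \<bar>g (xs k)\<bar>) \<le> fbl_norm V N g"
      using fbl_sums_le_fbl_norm f g by blast+
    have "s \<le> (\<Sum>k<n. a * \<bar>f (xs k)\<bar> + b * \<bar>g (xs k)\<bar>)"
      unfolding s using xs dom by (intro sum_mono) auto
    also have "\<dots> = a * (\<Sum>k<n. \<bar>f (xs k)\<bar>) + b * (\<Sum>k<n. \<bar>g (xs k)\<bar>)"
      by (simp add: sum.distrib sum_distrib_left)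
    also have "\<dots> \<le> a * fbl_norm V N f + b * fbl_norm V N g"
      using sums assms(3,4) by (intro add_mono mult_left_mono)
    finally show ?thesis .
  qed
  show "bdd_above (fbl_sums V N h)" by (rule bdd_aboveI[OF bound])
  show "fbl_norm V N h \<le> a * fbl_norm V N f + b * fbl_norm V N g" by (rule fbl_norm_le[OF bound])
qed

lemma dual_space_bound:
  assumes "\<And>x. 0 \<le> N x" "\<phi> \<in> dual_space V N"
  obtains C where "0 < C" "\<And>x. x \<in> V \<Longrightarrow> \<bar>\<phi> x\<bar> \<le> C * N x"
proof -
  obtain C where C: "\<forall>x\<in>V. \<bar>\<phi> x\<bar> \<le> C * N x" using assms(2) by (auto simp: dual_space_def)
  have "\<bar>\<phi> x\<bar> \<le> (\<bar>C\<bar> + 1) * N x" if "x \<in> V" for x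
    using C that mult_right_mono[of C "\<bar>C\<bar> + 1" "N x"] assms(1)[of x] by force
  thus ?thesis by (intro that[of "\<bar>C\<bar> + 1"]) auto
qed

lemma dual_space_scale:
  assumes "\<phi> \<in> dual_space V N"
  shows "(\<lambda>x. t * \<phi> x) \<in> dual_space V N"
proof -
  obtain C where C: "\<forall>x\<in>V. \<bar>\<phi> x\<bar> \<le> C * N x" using assms by (auto simp: dual_space_def)
  have "\<bar>t * \<phi> x\<bar> \<le> (\<bar>t\<bar> * C) * N x" if "x \<in> V" for x
    using mult_left_mono[of "\<bar>\<phi> x\<bar>" "C * N x" "\<bar>t\<bar>"] C that by (simp add: abs_mult mult.assoc)
  hence "\<exists>C. \<forall>x\<in>V. \<bar>t * \<phi> x\<bar> \<le> C * N x" by blast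
  thus ?thesis using assms by (auto simp: dual_space_def distrib_left mult.left_commute)
qed

lemma dual_space_homogeneous: "\<phi> \<in> dual_space V N \<Longrightarrow> x \<in> V \<Longrightarrow> \<phi> (\<lambda>\<gamma>. c * x \<gamma>) = c * \<phi> x"
  by (simp add: dual_space_def)

lemma H_spaceI:
  "(\<And>\<phi> t. \<phi> \<in> dual_space V N \<Longrightarrow> 0 < t \<Longrightarrow> f (\<lambda>x. t * \<phi> x) = t * f \<phi>)
    \<Longrightarrow> (\<And>\<phi>. \<phi> \<notin> dual_space V N \<Longrightarrow> f \<phi> = 0) \<Longrightarrow> f \<in> H_space V N"
  unfolding H_space_def by blast

lemma H_space_homogeneous:
  "f \<in> H_space V N \<Longrightarrow> \<phi> \<in> dual_space V N \<Longrightarrow> 0 < t \<Longrightarrow> f (\<lambda>x. t * \<phi> x) = t * f \<phi>"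
  unfolding H_space_def by blast

lemma H_space_outside: "f \<in> H_space V N \<Longrightarrow> \<phi> \<notin> dual_space V N \<Longrightarrow> f \<phi> = 0"
  unfolding H_space_def by blast

lemma H0_space_closed:
  assumes "f \<in> H0_space V N" "g \<in> H0_space V N"
  shows H0_space_add: "(\<lambda>\<phi>. f \<phi> + g \<phi>) \<in> H0_space V N"
    and H0_space_max: "(\<lambda>\<phi>. max (f \<phi>) (g \<phi>)) \<in> H0_space V N"
    and H0_space_scale: "(\<lambda>\<phi>. c * f \<phi>) \<in> H0_space V N"
proof -
  have fH: "f \<in> H_space V N" and gH: "g \<in> H_space V N"
    and bf: "bdd_above (fbl_sums V N f)" and bg: "bdd_above (fbl_sums V N g)"
    using assms by (auto simp: H0_space_def)
  note hom = H_space_homogeneous[OF fH] H_space_homogeneous[OF gH]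
    H_space_outside[OF fH] H_space_outside[OF gH]
  have "(\<lambda>\<phi>. f \<phi> + g \<phi>) \<in> H_space V N" "(\<lambda>\<phi>. max (f \<phi>) (g \<phi>)) \<in> H_space V N"
    "(\<lambda>\<phi>. c * f \<phi>) \<in> H_space V N"
    by (rule H_spaceI; simp add: hom distrib_left max_mult_distrib_left)+
  moreover have "bdd_above (fbl_sums V N (\<lambda>\<phi>. f \<phi> + g \<phi>))"
    "bdd_above (fbl_sums V N (\<lambda>\<phi>. max (f \<phi>) (g \<phi>)))"
    by (rule fbl_norm_dominated(1)[OF bf bg, of 1 1]; simp)+
  moreover have "bdd_above (fbl_sums V N (\<lambda>\<phi>. c * f \<phi>))"
    by (rule fbl_norm_dominated(1)[OF bf bg, of "\<bar>c\<bar>" 0]) (auto simp: abs_mult)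
  ultimately show "(\<lambda>\<phi>. f \<phi> + g \<phi>) \<in> H0_space V N"
    "(\<lambda>\<phi>. max (f \<phi>) (g \<phi>)) \<in> H0_space V N" "(\<lambda>\<phi>. c * f \<phi>) \<in> H0_space V N"
    by (simp_all add: H0_space_def)
qed

lemma H0_space_diff:
  assumes "f \<in> H0_space V N" "g \<in> H0_space V N"
  shows "(\<lambda>\<phi>. f \<phi> - g \<phi>) \<in> H0_space V N"
  using H0_space_add[OF assms(1) H0_space_scale[OF assms(2) assms(2), of "-1"]] by simp

lemma closed_sublattice_H0_space: "closed_sublattice V N (H0_space V N)"
  unfolding closed_sublattice_def using H0_space_closed by blast

lemma abs_le_fbl_norm_scaled:
  assumes h: "h \<in> H_space V N" "bdd_above (fbl_sums V N h)" and \<phi>: "\<phi> \<in> dual_space V N"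
    and C: "0 < C" "\<And>x. x \<in> V \<Longrightarrow> \<bar>\<phi> x\<bar> \<le> C * N x"
  shows "\<bar>h \<phi>\<bar> \<le> C * fbl_norm V N h"
proof -
  have unit: "\<bar>(1 / C) * \<phi> x\<bar> \<le> 1" if "x \<in> V" "N x \<le> 1" for x
  proof -
    have "\<bar>\<phi> x\<bar> \<le> C * 1" using C(2)[OF that(1)] mult_left_mono[OF that(2), of C] C(1) by linarith
    thus ?thesis using C(1) by (simp add: abs_mult field_simps)
  qed
  have le: "\<bar>h (\<lambda>x. (1 / C) * \<phi> x)\<bar> \<le> fbl_norm V N h"
    using unit by (intro abs_le_fbl_norm[OF h(2)] dual_space_scale[OF \<phi>])
  have "h \<phi> = C * h (\<lambda>x. (1 / C) * \<phi> x)"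
    using H_space_homogeneous[OF h(1) \<phi>, of "1 / C"] C(1) by simp
  hence "\<bar>h \<phi>\<bar> = C * \<bar>h (\<lambda>x. (1 / C) * \<phi> x)\<bar>"
    using C(1) by (simp add: abs_mult)
  also have "\<dots> \<le> C * fbl_norm V N h" using le C(1) by (intro mult_left_mono) auto
  finally show ?thesis .
qed

lemma H0_space_zero_if_fbl_norm_le_0:
  assumes "\<And>x. 0 \<le> N x" and h: "h \<in> H0_space V N" "fbl_norm V N h \<le> 0"
  shows "h = (\<lambda>_. 0)"
proof
  fix \<phi>
  have hH: "h \<in> H_space V N" and hb: "bdd_above (fbl_sums V N h)" using h by (auto simp: H0_space_def)
  show "h \<phi> = 0"
  proof (cases "\<phi> \<in> dual_space V N")
    case True
    then obtain C where "0 < C" "\<And>x. x \<in> V \<Longrightarrow> \<bar>\<phi> x\<bar> \<le> C * N x"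
      using dual_space_bound[where N = N and V = V, OF assms(1) True] by blast
    hence "\<bar>h \<phi>\<bar> \<le> C * fbl_norm V N h" by (intro abs_le_fbl_norm_scaled[OF hH hb True])
    also have "\<dots> \<le> 0" using \<open>0 < C\<close> h(2) by (simp add: mult_nonneg_nonpos)
    finally show ?thesis by simp
  qed (rule H_space_outside[OF hH])
qed

lemma delta_fun_in_H0_space:
  assumes scale: "\<And>x c. x \<in> V \<Longrightarrow> (\<lambda>\<gamma>. c * x \<gamma>) \<in> V"
    and norm_scale: "\<And>x c. x \<in> V \<Longrightarrow> 0 \<le> c \<Longrightarrow> N (\<lambda>\<gamma>. c * x \<gamma>) = c * N x"
    and norm_nonneg: "\<And>x. 0 \<le> N x"
    and x: "x \<in> V"
  shows "delta_fun V N x \<in> H0_space V N"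
proof -
  have "delta_fun V N x \<in> H_space V N"
    unfolding H_space_def delta_fun_def using dual_space_scale by auto
  moreover have "s \<le> N x + 1" if s_mem: "s \<in> fbl_sums V N (delta_fun V N x)" for s
  proof -
    obtain n xs where s: "s = (\<Sum>k<(n::nat). \<bar>delta_fun V N x (xs k)\<bar>)"
      and xs: "\<forall>k<n. xs k \<in> dual_space V N"
      and adm: "\<forall>y\<in>V. N y \<le> 1 \<longrightarrow> (\<Sum>k<n. \<bar>xs k y\<bar>) \<le> 1"
      using s_mem unfolding fbl_sums_def by blast
    define c where "c = 1 / (N x + 1)"
    have Nx: "0 < N x + 1" using norm_nonneg[of x] by simp
    hence c: "0 < c" by (simp add: c_def)
    have "N (\<lambda>\<gamma>. c * x \<gamma>) = c * N x" using norm_scale[OF x] c by simp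
    also have "\<dots> \<le> 1" using Nx by (simp add: c_def field_simps)
    finally have "N (\<lambda>\<gamma>. c * x \<gamma>) \<le> 1" .
    hence "(\<Sum>k<n. \<bar>xs k (\<lambda>\<gamma>. c * x \<gamma>)\<bar>) \<le> 1" using adm scale[OF x] by blast
    moreover have "(\<Sum>k<n. \<bar>xs k (\<lambda>\<gamma>. c * x \<gamma>)\<bar>) = c * s"
      unfolding s sum_distrib_left
    proof (rule sum.cong[OF refl])
      fix k assume "k \<in> {..<n}"
      thus "\<bar>xs k (\<lambda>\<gamma>. c * x \<gamma>)\<bar> = c * \<bar>delta_fun V N x (xs k)\<bar>"
        using dual_space_homogeneous[of "xs k" V N x c] xs x c by (simp add: delta_fun_def abs_mult)
    qed
    ultimately have "c * s \<le> 1" by simp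
    thus ?thesis using Nx by (simp add: c_def field_simps)
  qed
  hence "bdd_above (fbl_sums V N (delta_fun V N x))" by (rule bdd_aboveI)
  ultimately show ?thesis by (simp add: H0_space_def)
qed

lemma FBL_subset_H0_space:
  assumes "\<And>x c. x \<in> V \<Longrightarrow> (\<lambda>\<gamma>. c * x \<gamma>) \<in> V"
    and "\<And>x c. x \<in> V \<Longrightarrow> 0 \<le> c \<Longrightarrow> N (\<lambda>\<gamma>. c * x \<gamma>) = c * N x"
    and "\<And>x. 0 \<le> N x"
  shows "FBL V N \<subseteq> H0_space V N"
proof -
  have "delta_fun V N x \<in> H0_space V N" if "x \<in> V" for x
    by (rule delta_fun_in_H0_space) (use assms that in auto)
  thus ?thesis unfolding FBL_def using closed_sublattice_H0_space by blast
qed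

section \<open>Sequences in \<open>\<ell>\<^sub>1\<close>\<close>

lemma l1_add:
  assumes "x \<in> l1" "y \<in> l1"
  shows "(\<lambda>g. x g + y g) \<in> l1"
proof -
  have "(\<lambda>g. \<bar>x g\<bar> + \<bar>y g\<bar>) summable_on UNIV"
    using assms by (intro summable_on_add) (auto simp: l1_def)
  hence "(\<lambda>g. \<bar>x g + y g\<bar>) summable_on UNIV"
    by (rule summable_on_comparison_test) auto
  thus ?thesis by (simp add: l1_def)
qed

lemma l1_scale:
  assumes "x \<in> l1"
  shows "(\<lambda>g. c * x g) \<in> l1"
proof -
  have "(\<lambda>g. \<bar>c\<bar> * \<bar>x g\<bar>) summable_on UNIV"
    using assms by (intro summable_on_cmult_right) (auto simp: l1_def)
  thus ?thesis by (simp add: l1_def abs_mult)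
qed

lemma l1_diff: "x \<in> l1 \<Longrightarrow> y \<in> l1 \<Longrightarrow> (\<lambda>g. x g - y g) \<in> l1"
  using l1_add[OF _ l1_scale, of x y "-1"] by simp

lemma l1_mono: "x \<in> l1 \<Longrightarrow> (\<And>g. \<bar>y g\<bar> \<le> \<bar>x g\<bar>) \<Longrightarrow> y \<in> l1"
  unfolding l1_def mem_Collect_eq by (rule summable_on_comparison_test) auto

lemma l1_tail_small:
  assumes "x \<in> l1" "0 < e"
  obtains F where "finite F" "l1_norm (\<lambda>g. if g \<in> F then 0 else x g) \<le> e"
proof -
  have sx: "(\<lambda>g. \<bar>x g\<bar>) summable_on UNIV" using assms(1) by (simp add: l1_def)
  obtain F where F: "finite F" "dist (sum (\<lambda>g. \<bar>x g\<bar>) F) (\<Sum>\<^sub>\<infinity>g. \<bar>x g\<bar>) \<le> e"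
    using infsum_finite_approximation[OF sx assms(2)] by blast
  have "l1_norm (\<lambda>g. if g \<in> F then 0 else x g) = (\<Sum>\<^sub>\<infinity>g\<in>UNIV - F. \<bar>x g\<bar>)"
    unfolding l1_norm_def by (rule infsum_cong_neutral) auto
  also have "\<dots> = (\<Sum>\<^sub>\<infinity>g. \<bar>x g\<bar>) - sum (\<lambda>g. \<bar>x g\<bar>) F"
    using infsum_Diff[OF sx, of F] F(1) by simp
  also have "\<dots> \<le> e" using F(2) by (simp add: dist_real_def)
  finally show ?thesis using F(1) that by blast
qed

lemma l1_pointwise_limit:
  assumes X: "\<And>n. X n \<in> l1"
    and cauchy: "\<And>n m. l1_norm (\<lambda>g. X n g - X m g) \<le> \<delta> n + \<delta> m"
    and \<delta>: "\<delta> \<longlonglongrightarrow> 0" and lim: "\<And>g. (\<lambda>n. X n g) \<longlonglongrightarrow> x g"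
  shows "x \<in> l1" and "l1_norm (\<lambda>g. X n g - x g) \<le> \<delta> n"
proof -
  have finite_bound: "(\<Sum>g\<in>F. \<bar>X n g - x g\<bar>) \<le> \<delta> n" if "finite F" for F n
  proof -
    have "(\<Sum>g\<in>F. \<bar>X n g - X m g\<bar>) \<le> \<delta> n + \<delta> m" for m
    proof -
      have "(\<Sum>g\<in>F. \<bar>X n g - X m g\<bar>) = (\<Sum>\<^sub>\<infinity>g\<in>F. \<bar>X n g - X m g\<bar>)" using that by simp
      also have "\<dots> \<le> l1_norm (\<lambda>g. X n g - X m g)"
        unfolding l1_norm_def using l1_diff[OF X X, of n m] that
        by (intro infsum_mono_neutral) (auto simp: l1_def)
      finally show ?thesis using cauchy[of n m] by linarith
    qed
    moreover have "(\<lambda>m. \<Sum>g\<in>F. \<bar>X n g - X m g\<bar>) \<longlonglongrightarrow> (\<Sum>g\<in>F. \<bar>X n g - x g\<bar>)"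
      by (intro tendsto_intros lim)
    moreover have "(\<lambda>m. \<delta> n + \<delta> m) \<longlonglongrightarrow> \<delta> n + 0" by (intro tendsto_intros \<delta>)
    ultimately have "(\<Sum>g\<in>F. \<bar>X n g - x g\<bar>) \<le> \<delta> n + 0"
      by (intro LIMSEQ_le) auto
    thus ?thesis by simp
  qed
  have diff: "(\<lambda>g. X n g - x g) \<in> l1" for n
  proof -
    have "(\<lambda>g. \<bar>X n g - x g\<bar>) summable_on UNIV"
      using finite_bound by (intro nonneg_bdd_above_summable_on bdd_aboveI[of _ "\<delta> n"]) auto
    thus ?thesis by (simp add: l1_def)
  qed
  show "x \<in> l1" using l1_diff[OF X diff, of 0 0] by simp
  show "l1_norm (\<lambda>g. X n g - x g) \<le> \<delta> n"
    unfolding l1_norm_def using diff[of n] finite_bound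
    by (intro infsum_le_finite_sums) (auto simp: l1_def)
qed

section \<open>The embedding of \<open>\<ell>\<^sub>1\<close> into \<open>FBL[\<ell>\<^sub>p]\<close>\<close>

text \<open>The upper estimate and membership in \<open>FBL\<close> hold for every \<open>0 < p\<close>; only the lower
  estimate needs \<open>p \<le> 2\<close>.\<close>

locale lp_exponent =
  fixes p :: real
  assumes p_pos: "0 < p"
begin

abbreviation lp_dual :: "(('g \<Rightarrow> real) \<Rightarrow> real) set" where
  "lp_dual \<equiv> dual_space (lp p) (lp_norm p)"

abbreviation lp_fbl_norm :: "((('g \<Rightarrow> real) \<Rightarrow> real) \<Rightarrow> real) \<Rightarrow> real" where
  "lp_fbl_norm \<equiv> fbl_norm (lp p) (lp_norm p)"

lemma lp_add:
  assumes "x \<in> lp p" "y \<in> lp p"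
  shows "(\<lambda>g. x g + y g) \<in> lp p"
proof -
  have s: "(\<lambda>g. 2 powr p * (\<bar>x g\<bar> powr p + \<bar>y g\<bar> powr p)) summable_on UNIV"
    using assms by (intro summable_on_cmult_right summable_on_add) (auto simp: lp_def)
  have le: "\<bar>x g + y g\<bar> powr p \<le> 2 powr p * (\<bar>x g\<bar> powr p + \<bar>y g\<bar> powr p)" for g
  proof -
    have "\<bar>x g + y g\<bar> powr p \<le> (2 * max \<bar>x g\<bar> \<bar>y g\<bar>) powr p"
      using p_pos by (intro powr_mono2) auto
    also have "\<dots> = 2 powr p * max \<bar>x g\<bar> \<bar>y g\<bar> powr p" by (simp add: powr_mult)
    also have "max \<bar>x g\<bar> \<bar>y g\<bar> powr p \<le> \<bar>x g\<bar> powr p + \<bar>y g\<bar> powr p"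
      by (cases "\<bar>x g\<bar> \<le> \<bar>y g\<bar>") (auto simp: max_def)
    finally show ?thesis by simp
  qed
  show ?thesis unfolding lp_def
    by (auto intro!: summable_on_comparison_test[OF s] le)
qed

lemma lp_scale: "x \<in> lp p \<Longrightarrow> (\<lambda>g. c * x g) \<in> lp p"
  unfolding lp_def by (auto simp: abs_mult powr_mult intro: summable_on_cmult_right)

lemma lp_norm_nonneg: "0 \<le> lp_norm p x"
  by (simp add: lp_norm_def)

lemma lp_norm_scale:
  assumes "x \<in> lp p" "0 \<le> c"
  shows "lp_norm p (\<lambda>g. c * x g) = c * lp_norm p x"
proof -
  have s: "(\<lambda>g. \<bar>x g\<bar> powr p) summable_on UNIV" using assms by (auto simp: lp_def)
  have "(\<Sum>\<^sub>\<infinity>g. \<bar>c * x g\<bar> powr p) = c powr p * (\<Sum>\<^sub>\<infinity>g. \<bar>x g\<bar> powr p)"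
    using assms by (simp add: abs_mult powr_mult infsum_cmult_right[OF s])
  moreover have "0 \<le> (\<Sum>\<^sub>\<infinity>g. \<bar>x g\<bar> powr p)" by (intro infsum_nonneg) auto
  ultimately show ?thesis using assms p_pos
    by (simp add: lp_norm_def powr_mult powr_powr)
qed

lemma abs_le_lp_norm:
  assumes "x \<in> lp p"
  shows "\<bar>x g\<bar> \<le> lp_norm p x"
proof -
  have "(\<Sum>\<^sub>\<infinity>d\<in>{g}. \<bar>x d\<bar> powr p) \<le> (\<Sum>\<^sub>\<infinity>d. \<bar>x d\<bar> powr p)"
    using assms by (intro infsum_mono_neutral) (auto simp: lp_def)
  hence "(\<bar>x g\<bar> powr p) powr (1 / p) \<le> (\<Sum>\<^sub>\<infinity>d. \<bar>x d\<bar> powr p) powr (1 / p)"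
    using p_pos by (intro powr_mono2) auto
  thus ?thesis using p_pos by (simp add: powr_powr lp_norm_def)
qed

lemma unit_vec_in_lp: "unit_vec g \<in> lp p"
  and lp_norm_unit_vec: "lp_norm p (unit_vec g) = 1"
proof -
  have "((\<lambda>d. \<bar>unit_vec g d\<bar> powr p) has_sum 1) UNIV"
    by (rule has_sum_finite_neutralI[where B = "{g}"]) (auto simp: unit_vec_def)
  thus "unit_vec g \<in> lp p" "lp_norm p (unit_vec g) = 1"
    by (auto simp: lp_def lp_norm_def summable_on_def infsumI)
qed

lemma FBL_lp_subset_H0_space: "FBL (lp p) (lp_norm p) \<subseteq> H0_space (lp p) (lp_norm p)"
  by (rule FBL_subset_H0_space) (auto simp: lp_scale lp_norm_scale lp_norm_nonneg)

lemma lp_dual_bounded_on_unit_vecs: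
  assumes "\<phi> \<in> lp_dual"
  obtains C where "0 < C" "\<And>g. \<bar>\<phi> (unit_vec g)\<bar> \<le> C"
proof -
  obtain C where "0 < C" "\<And>x. x \<in> lp p \<Longrightarrow> \<bar>\<phi> x\<bar> \<le> C * lp_norm p x"
    using dual_space_bound[where N = "lp_norm p", OF lp_norm_nonneg assms] by blast
  thus ?thesis using that unit_vec_in_lp lp_norm_unit_vec by (metis mult.right_neutral)
qed

definition coord_functional :: "'g \<Rightarrow> ('g \<Rightarrow> real) \<Rightarrow> real" where
  "coord_functional g = (\<lambda>x. if x \<in> lp p then x g else 0)"

lemma abs_coord_functional_le: "x \<in> lp p \<Longrightarrow> \<bar>coord_functional g x\<bar> \<le> lp_norm p x"
  by (simp add: coord_functional_def abs_le_lp_norm)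

lemma coord_functional_in_dual: "coord_functional g \<in> lp_dual"
  unfolding dual_space_def using abs_le_lp_norm
  by (auto simp: coord_functional_def lp_add lp_scale intro!: exI[of _ 1])

lemma coord_functional_unit_vec: "coord_functional g (unit_vec d) = (if d = g then 1 else 0)"
  using unit_vec_in_lp[of d] by (simp add: coord_functional_def unit_vec_def)

definition l1_embed :: "('g \<Rightarrow> real) \<Rightarrow> (('g \<Rightarrow> real) \<Rightarrow> real) \<Rightarrow> real" where
  "l1_embed z = (\<lambda>\<phi>. if \<phi> \<in> lp_dual then \<Sum>\<^sub>\<infinity>g. z g * \<bar>\<phi> (unit_vec g)\<bar> else 0)"

lemma abs_summable_l1_embed:
  assumes "z \<in> l1" "\<phi> \<in> lp_dual"
  shows "(\<lambda>g. \<bar>z g\<bar> * \<bar>\<phi> (unit_vec g)\<bar>) summable_on UNIV"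
proof -
  obtain C where C: "0 < C" "\<And>g. \<bar>\<phi> (unit_vec g)\<bar> \<le> C"
    using lp_dual_bounded_on_unit_vecs[OF assms(2)] by blast
  have "(\<lambda>g. \<bar>z g\<bar> * C) summable_on UNIV"
    using assms(1) by (intro summable_on_cmult_left) (simp add: l1_def)
  thus ?thesis
    by (rule summable_on_comparison_test) (auto intro: mult_left_mono C(2))
qed

lemma summable_l1_embed:
  assumes "z \<in> l1" "\<phi> \<in> lp_dual"
  shows "(\<lambda>g. z g * \<bar>\<phi> (unit_vec g)\<bar>) summable_on UNIV"
  by (rule abs_summable_summable) (use abs_summable_l1_embed[OF assms] in \<open>simp add: abs_mult\<close>)

lemma abs_l1_embed_le:
  assumes "z \<in> l1" "\<phi> \<in> lp_dual"
  shows "\<bar>l1_embed z \<phi>\<bar> \<le> (\<Sum>\<^sub>\<infinity>g. \<bar>z g\<bar> * \<bar>\<phi> (unit_vec g)\<bar>)"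
proof -
  have "Infinite_Sum.abs_summable_on (\<lambda>g. z g * \<bar>\<phi> (unit_vec g)\<bar>) UNIV"
    using abs_summable_l1_embed[OF assms] by (simp add: abs_mult)
  from norm_infsum_bound[OF this] show ?thesis using assms(2) by (simp add: l1_embed_def abs_mult)
qed

lemma fbl_sums_l1_embed_le:
  assumes z: "z \<in> l1" and s_mem: "s \<in> fbl_sums (lp p) (lp_norm p) (l1_embed z)"
  shows "s \<le> l1_norm z"
proof -
  obtain n xs where s: "s = (\<Sum>k<(n::nat). \<bar>l1_embed z (xs k)\<bar>)"
    and xs: "\<forall>k<n. xs k \<in> lp_dual"
    and adm: "\<forall>x\<in>lp p. lp_norm p x \<le> 1 \<longrightarrow> (\<Sum>k<n. \<bar>xs k x\<bar>) \<le> 1"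
    using s_mem unfolding fbl_sums_def by blast
  let ?a = "\<lambda>k g. \<bar>z g\<bar> * \<bar>xs k (unit_vec g)\<bar>"
  have sums: "((\<lambda>g. \<Sum>k<n. ?a k g) has_sum (\<Sum>k<n. \<Sum>\<^sub>\<infinity>g. ?a k g)) UNIV"
    using abs_summable_l1_embed[OF z] xs by (intro has_sum_sum has_sum_infsum) auto
  have "s \<le> (\<Sum>k<n. \<Sum>\<^sub>\<infinity>g. ?a k g)"
    unfolding s using abs_l1_embed_le[OF z] xs by (intro sum_mono) auto
  also have "\<dots> = (\<Sum>\<^sub>\<infinity>g. \<Sum>k<n. ?a k g)" by (rule infsumI[OF sums, symmetric])
  also have "\<dots> \<le> (\<Sum>\<^sub>\<infinity>g. \<bar>z g\<bar>)"
  proof (rule infsum_mono)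
    show "(\<lambda>g. \<Sum>k<n. ?a k g) summable_on UNIV" using sums by (rule has_sum_imp_summable)
    show "(\<lambda>g. \<bar>z g\<bar>) summable_on UNIV" using z by (simp add: l1_def)
    fix g
    have "(\<Sum>k<n. \<bar>xs k (unit_vec g)\<bar>) \<le> 1"
      using adm unit_vec_in_lp[of g] lp_norm_unit_vec[of g] by simp
    hence "\<bar>z g\<bar> * (\<Sum>k<n. \<bar>xs k (unit_vec g)\<bar>) \<le> \<bar>z g\<bar> * 1" by (intro mult_left_mono) auto
    thus "(\<Sum>k<n. ?a k g) \<le> \<bar>z g\<bar>" by (simp add: sum_distrib_left)
  qed
  finally show ?thesis by (simp add: l1_norm_def)
qed

lemma bdd_above_fbl_sums_l1_embed: "z \<in> l1 \<Longrightarrow> bdd_above (fbl_sums (lp p) (lp_norm p) (l1_embed z))"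
  using fbl_sums_l1_embed_le by (rule bdd_aboveI)

lemma fbl_norm_l1_embed_le: "z \<in> l1 \<Longrightarrow> lp_fbl_norm (l1_embed z) \<le> l1_norm z"
  using fbl_sums_l1_embed_le by (rule fbl_norm_le)

lemma l1_embed_in_H0_space:
  assumes "z \<in> l1"
  shows "l1_embed z \<in> H0_space (lp p) (lp_norm p)"
proof -
  have "l1_embed z (\<lambda>x. t * \<phi> x) = t * l1_embed z \<phi>" if "\<phi> \<in> lp_dual" "0 < t" for \<phi> t
    using that dual_space_scale[OF that(1), of t]
    by (simp add: l1_embed_def abs_mult mult.left_commute infsum_cmult_right')
  hence "l1_embed z \<in> H_space (lp p) (lp_norm p)" by (intro H_spaceI) (auto simp: l1_embed_def)
  thus ?thesis using bdd_above_fbl_sums_l1_embed[OF assms] by (simp add: H0_space_def)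
qed

lemma l1_embed_add:
  assumes "x \<in> l1" "y \<in> l1"
  shows "l1_embed (\<lambda>g. x g + y g) = (\<lambda>\<phi>. l1_embed x \<phi> + l1_embed y \<phi>)"
proof
  fix \<phi>
  show "l1_embed (\<lambda>g. x g + y g) \<phi> = l1_embed x \<phi> + l1_embed y \<phi>"
    using summable_l1_embed[OF assms(1)] summable_l1_embed[OF assms(2)]
    by (simp add: l1_embed_def distrib_right infsum_add)
qed

lemma l1_embed_scale:
  assumes "x \<in> l1"
  shows "l1_embed (\<lambda>g. c * x g) = (\<lambda>\<phi>. c * l1_embed x \<phi>)"
proof
  fix \<phi>
  show "l1_embed (\<lambda>g. c * x g) \<phi> = c * l1_embed x \<phi>"
    using summable_l1_embed[OF assms] by (simp add: l1_embed_def mult.assoc infsum_cmult_right)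
qed

lemma l1_embed_diff:
  "x \<in> l1 \<Longrightarrow> y \<in> l1 \<Longrightarrow> l1_embed (\<lambda>g. x g - y g) = (\<lambda>\<phi>. l1_embed x \<phi> - l1_embed y \<phi>)"
  using l1_embed_add[OF _ l1_scale, of x y "-1"] l1_embed_scale[of y "-1"] by simp

lemma l1_embed_coord_functional: "l1_embed z (coord_functional g) = z g"
proof -
  have "(\<Sum>\<^sub>\<infinity>d. z d * \<bar>coord_functional g (unit_vec d)\<bar>) = (\<Sum>d\<in>{g}. z d * \<bar>coord_functional g (unit_vec d)\<bar>)"
    by (rule infsumI[OF has_sum_finite_support]) (auto simp: coord_functional_unit_vec)
  thus ?thesis using coord_functional_in_dual[of g]
    by (simp add: l1_embed_def coord_functional_unit_vec)
qed

lemma inj_on_l1_embed: "inj_on l1_embed l1"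
  by (rule inj_onI, rule ext) (metis l1_embed_coord_functional)

lemma l1_embed_finite_support:
  assumes "finite F"
  shows "l1_embed (\<lambda>g. if g \<in> F then x g else 0)
    = (\<lambda>\<phi>. \<Sum>g\<in>F. x g * \<bar>delta_fun (lp p) (lp_norm p) (unit_vec g) \<phi>\<bar>)"
proof
  fix \<phi>
  show "l1_embed (\<lambda>g. if g \<in> F then x g else 0) \<phi>
    = (\<Sum>g\<in>F. x g * \<bar>delta_fun (lp p) (lp_norm p) (unit_vec g) \<phi>\<bar>)"
  proof (cases "\<phi> \<in> lp_dual")
    case True
    have "(\<Sum>\<^sub>\<infinity>g. (if g \<in> F then x g else 0) * \<bar>\<phi> (unit_vec g)\<bar>)
        = (\<Sum>g\<in>F. (if g \<in> F then x g else 0) * \<bar>\<phi> (unit_vec g)\<bar>)"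
      by (rule infsumI[OF has_sum_finite_support[OF assms]]) auto
    thus ?thesis using True by (simp add: l1_embed_def delta_fun_def)
  qed (simp add: l1_embed_def delta_fun_def)
qed

lemma abs_delta_sum_in_closed_sublattice:
  assumes S: "closed_sublattice (lp p) (lp_norm p) S" "delta_fun (lp p) (lp_norm p) ` lp p \<subseteq> S"
    and "finite F"
  shows "(\<lambda>\<phi>. \<Sum>g\<in>F. c g * \<bar>delta_fun (lp p) (lp_norm p) (unit_vec g) \<phi>\<bar>) \<in> S"
proof -
  let ?\<delta> = "\<lambda>g. delta_fun (lp p) (lp_norm p) (unit_vec g)"
  have add: "\<And>f g. f \<in> S \<Longrightarrow> g \<in> S \<Longrightarrow> (\<lambda>\<phi>. f \<phi> + g \<phi>) \<in> S"
    and scale: "\<And>f c. f \<in> S \<Longrightarrow> (\<lambda>\<phi>. c * f \<phi>) \<in> S"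
    and max: "\<And>f g. f \<in> S \<Longrightarrow> g \<in> S \<Longrightarrow> (\<lambda>\<phi>. max (f \<phi>) (g \<phi>)) \<in> S"
    using S(1) unfolding closed_sublattice_def by simp_all
  have \<delta>: "?\<delta> g \<in> S" for g by (intro subsetD[OF S(2)] imageI unit_vec_in_lp)
  have abs: "(\<lambda>\<phi>. \<bar>?\<delta> g \<phi>\<bar>) \<in> S" for g
  proof -
    have "(\<lambda>\<phi>. max (?\<delta> g \<phi>) ((-1) * ?\<delta> g \<phi>)) = (\<lambda>\<phi>. \<bar>?\<delta> g \<phi>\<bar>)"
      by (rule ext) (simp add: max_def)
    thus ?thesis using max[OF \<delta>[of g] scale[OF \<delta>[of g], of "-1"]] by simp
  qed
  show ?thesis using \<open>finite F\<close>
  proof (induction F rule: finite_induct)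
    case empty
    show ?case using scale[OF \<delta>, of 0] by simp
  next
    case (insert a F)
    show ?case using add[OF scale[OF abs, of "c a"] insert.IH] insert.hyps by simp
  qed
qed

lemma l1_embed_in_FBL:
  fixes x :: "'g \<Rightarrow> real"
  assumes x: "x \<in> l1"
  shows "l1_embed x \<in> FBL (lp p) (lp_norm p)"
  unfolding FBL_def
proof (rule InterI)
  fix S :: "((('g \<Rightarrow> real) \<Rightarrow> real) \<Rightarrow> real) set"
  assume "S \<in> {S. closed_sublattice (lp p) (lp_norm p) S \<and> delta_fun (lp p) (lp_norm p) ` lp p \<subseteq> S}"
  hence S: "closed_sublattice (lp p) (lp_norm p) S" "delta_fun (lp p) (lp_norm p) ` lp p \<subseteq> S"
    by auto
  have "\<exists>F. finite F \<and> l1_norm (\<lambda>g. if g \<in> F then 0 else x g) \<le> inverse (real (Suc n))" for n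
    by (rule l1_tail_small[OF x]) auto
  then obtain Fs where Fs: "\<And>n. finite (Fs n)"
    "\<And>n. l1_norm (\<lambda>g. if g \<in> Fs n then 0 else x g) \<le> inverse (real (Suc n))"
    by metis
  define u where "u n = l1_embed (\<lambda>g. if g \<in> Fs n then x g else 0)" for n
  have u: "\<forall>n. u n \<in> S"
    unfolding u_def l1_embed_finite_support[OF Fs(1)]
    using abs_delta_sum_in_closed_sublattice[OF S Fs(1)] by blast
  have bounds: "0 \<le> lp_fbl_norm (\<lambda>\<phi>. u n \<phi> - l1_embed x \<phi>)
    \<and> lp_fbl_norm (\<lambda>\<phi>. u n \<phi> - l1_embed x \<phi>) \<le> inverse (real (Suc n))" for n
  proof -
    let ?r = "\<lambda>g. if g \<in> Fs n then x g else 0"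
    have r: "?r \<in> l1" by (rule l1_mono[OF x]) auto
    have eq: "(\<lambda>\<phi>. u n \<phi> - l1_embed x \<phi>) = l1_embed (\<lambda>g. ?r g - x g)"
      unfolding u_def using l1_embed_diff[OF r x] by simp
    have "lp_fbl_norm (l1_embed (\<lambda>g. ?r g - x g)) \<le> l1_norm (\<lambda>g. ?r g - x g)"
      by (rule fbl_norm_l1_embed_le[OF l1_diff[OF r x]])
    also have "\<dots> = l1_norm (\<lambda>g. if g \<in> Fs n then 0 else x g)"
      unfolding l1_norm_def by (intro infsum_cong) auto
    finally show ?thesis
      using Fs(2)[of n] fbl_norm_nonneg[OF bdd_above_fbl_sums_l1_embed[OF l1_diff[OF r x]]]
      unfolding eq by linarith
  qed
  have "(\<lambda>n. lp_fbl_norm (\<lambda>\<phi>. u n \<phi> - l1_embed x \<phi>)) \<longlonglongrightarrow> 0"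
    by (rule tendsto_sandwich[OF _ _ tendsto_const LIMSEQ_inverse_real_of_nat]) (use bounds in auto)
  with u show "l1_embed x \<in> S"
    using S(1) l1_embed_in_H0_space[OF x] unfolding closed_sublattice_def by blast
qed

definition rademacher_functional :: "'g list \<Rightarrow> ('g \<Rightarrow> real) \<Rightarrow> ('g \<Rightarrow> real) \<Rightarrow> real" where
  "rademacher_functional as e =
     (\<lambda>x. if x \<in> lp p then (\<Sum>g\<in>set as. e g * x g) / 2 ^ length as else 0)"

lemma rademacher_functional_in_dual: "rademacher_functional as e \<in> lp_dual"
proof -
  have bound: "\<bar>rademacher_functional as e x\<bar> \<le> ((\<Sum>g\<in>set as. \<bar>e g\<bar>) / 2 ^ length as) * lp_norm p x"
    if "x \<in> lp p" for x
  proof -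
    have "\<bar>\<Sum>g\<in>set as. e g * x g\<bar> \<le> (\<Sum>g\<in>set as. \<bar>e g\<bar> * \<bar>x g\<bar>)"
      by (rule order_trans[OF sum_abs]) (simp add: abs_mult)
    also have "\<dots> \<le> (\<Sum>g\<in>set as. \<bar>e g\<bar> * lp_norm p x)"
      using abs_le_lp_norm[OF that] by (intro sum_mono mult_left_mono) auto
    also have "\<dots> = (\<Sum>g\<in>set as. \<bar>e g\<bar>) * lp_norm p x" by (simp add: sum_distrib_right)
    finally show ?thesis
      using that by (simp add: rademacher_functional_def divide_right_mono)
  qed
  hence "\<exists>C. \<forall>x\<in>lp p. \<bar>rademacher_functional as e x\<bar> \<le> C * lp_norm p x" by blast
  thus ?thesis unfolding dual_space_def
    by (auto simp: rademacher_functional_def lp_add lp_scale sum.distrib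
        distrib_left add_divide_distrib sum_distrib_left mult.left_commute)
qed

lemma l1_embed_rademacher_functional:
  assumes "e \<in> set (sign_vectors as)"
  shows "l1_embed z (rademacher_functional as e) = (\<Sum>g\<in>set as. z g) / 2 ^ length as"
proof -
  have "\<bar>rademacher_functional as e (unit_vec d)\<bar> = (if d \<in> set as then 1 / 2 ^ length as else 0)" for d
  proof -
    have "(\<Sum>g\<in>set as. e g * unit_vec d g) = (if d \<in> set as then e d else 0)"
      by (simp add: unit_vec_def if_distrib[of "\<lambda>t. e _ * t"] sum.delta' cong: if_cong)
    thus ?thesis using abs_sign_vectors[OF assms, of d] unit_vec_in_lp[of d]
      by (simp add: rademacher_functional_def abs_divide)
  qed
  hence "(\<Sum>\<^sub>\<infinity>d. z d * \<bar>rademacher_functional as e (unit_vec d)\<bar>) = (\<Sum>d\<in>set as. z d / 2 ^ length as)"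
    by (subst infsumI[OF has_sum_finite_support[of "set as"]]) auto
  thus ?thesis using rademacher_functional_in_dual[of as e]
    by (simp add: l1_embed_def sum_divide_distrib)
qed

end

locale lp_exponent_le_2 = lp_exponent +
  assumes p_le_2: "p \<le> 2"
begin

lemma sum_squares_le_1:
  assumes "x \<in> lp p" "lp_norm p x \<le> 1" "finite P"
  shows "(\<Sum>g\<in>P. (x g)^2) \<le> 1"
proof -
  have s: "(\<lambda>g. \<bar>x g\<bar> powr p) summable_on UNIV" using assms(1) by (simp add: lp_def)
  define S where "S = (\<Sum>\<^sub>\<infinity>g. \<bar>x g\<bar> powr p)"
  have S0: "0 \<le> S" unfolding S_def by (intro infsum_nonneg) auto
  have "S powr (1 / p) \<le> 1" using assms(2) by (simp add: lp_norm_def S_def)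
  hence "(S powr (1 / p)) powr p \<le> 1 powr p" using p_pos by (intro powr_mono2) auto
  hence S: "S \<le> 1" using p_pos S0 by (simp add: powr_powr)
  have "(x g)^2 \<le> \<bar>x g\<bar> powr p" for g
  proof -
    have "\<bar>x g\<bar> \<le> 1" using abs_le_lp_norm[OF assms(1), of g] assms(2) by simp
    hence "\<bar>x g\<bar> powr 2 \<le> \<bar>x g\<bar> powr p" using p_pos p_le_2 by (intro powr_mono') auto
    thus ?thesis by (simp add: powr_numeral)
  qed
  hence "(\<Sum>g\<in>P. (x g)^2) \<le> (\<Sum>g\<in>P. \<bar>x g\<bar> powr p)" by (intro sum_mono)
  also have "\<dots> = (\<Sum>\<^sub>\<infinity>g\<in>P. \<bar>x g\<bar> powr p)" using assms(3) by simp
  also have "\<dots> \<le> S" unfolding S_def by (intro infsum_mono_neutral s) (auto simp: assms(3))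
  finally show ?thesis using S by simp
qed

lemma sum_rademacher_functionals_le_1:
  assumes "distinct as" "x \<in> lp p" "lp_norm p x \<le> 1"
  shows "(\<Sum>k<2 ^ length as. \<bar>rademacher_functional as (sign_vectors as ! k) x\<bar>) \<le> 1"
proof -
  define m :: nat where "m = 2 ^ length as"
  define S where "S k = (\<Sum>g\<in>set as. (sign_vectors as ! k) g * x g)" for k
  have Q: "(\<Sum>g\<in>set as. (x g)^2) \<le> 1" using sum_squares_le_1[OF assms(2,3)] by simp
  have squares: "(\<Sum>k<m. (S k)^2) = m * (\<Sum>g\<in>set as. (x g)^2)"
    using sum_list_sign_vectors_square[OF assms(1), of 0 x]
    unfolding sum_list_sum_nth
    by (simp add: m_def S_def length_sign_vectors atLeast0LessThan)
  have "(\<Sum>k<m. \<bar>S k\<bar>)^2 \<le> (\<Sum>k<m. \<bar>S k\<bar>^2) * card {..<m}"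
    by (rule sum_squared_le_sum_of_squares)
  also have "\<dots> = real m * (\<Sum>g\<in>set as. (x g)^2) * real m" using squares by simp
  also have "\<dots> \<le> real m * 1 * real m" using Q by (intro mult_right_mono mult_left_mono) auto
  also have "\<dots> = (real m)^2" by (simp add: power2_eq_square)
  finally have "(\<Sum>k<m. \<bar>S k\<bar>) \<le> m" by (rule power2_le_imp_le) simp
  moreover have "\<bar>rademacher_functional as (sign_vectors as ! k) x\<bar> = \<bar>S k\<bar> / m" for k
    using assms(2) by (simp add: m_def rademacher_functional_def S_def abs_divide)
  ultimately show ?thesis by (simp add: m_def divide_le_eq_1 flip: sum_divide_distrib)
qed

lemma abs_sum_le_fbl_norm_l1_embed:
  assumes z: "z \<in> l1" and "finite P"
  shows "\<bar>\<Sum>g\<in>P. z g\<bar> \<le> lp_fbl_norm (l1_embed z)"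
proof -
  obtain as where as: "distinct as" "set as = P" using finite_distinct_list[OF \<open>finite P\<close>] by blast
  define n :: nat where "n = 2 ^ length as"
  define xs where "xs k = rademacher_functional as (sign_vectors as ! k)" for k
  have "(\<Sum>k<n. \<bar>l1_embed z (xs k)\<bar>) = (\<Sum>k<n. \<bar>\<Sum>g\<in>P. z g\<bar> / 2 ^ length as)"
    using as by (intro sum.cong)
      (auto simp: xs_def n_def length_sign_vectors l1_embed_rademacher_functional abs_divide)
  also have "\<dots> = \<bar>\<Sum>g\<in>P. z g\<bar>" by (simp add: n_def)
  finally have eq: "(\<Sum>k<n. \<bar>l1_embed z (xs k)\<bar>) = \<bar>\<Sum>g\<in>P. z g\<bar>" .
  have "(\<Sum>k<n. \<bar>l1_embed z (xs k)\<bar>) \<in> fbl_sums (lp p) (lp_norm p) (l1_embed z)"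
    unfolding fbl_sums_def
  proof (intro CollectI exI conjI)
    show "\<forall>k<n. xs k \<in> lp_dual" by (simp add: xs_def rademacher_functional_in_dual)
    show "\<forall>x\<in>lp p. lp_norm p x \<le> 1 \<longrightarrow> (\<Sum>k<n. \<bar>xs k x\<bar>) \<le> 1"
      using sum_rademacher_functionals_le_1[OF as(1)] by (simp add: xs_def n_def)
  qed (rule refl)
  thus ?thesis using fbl_sums_le_fbl_norm[OF bdd_above_fbl_sums_l1_embed[OF z]] eq by simp
qed

lemma l1_norm_le_fbl_norm_l1_embed:
  fixes z :: "'g \<Rightarrow> real"
  assumes z: "z \<in> l1"
  shows "l1_norm z \<le> 2 * lp_fbl_norm (l1_embed z)"
  unfolding l1_norm_def
proof (rule infsum_le_finite_sums)
  show "(\<lambda>g. \<bar>z g\<bar>) summable_on UNIV" using z by (simp add: l1_def)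
  fix F :: "'g set" assume F: "finite F"
  let ?pos = "{g\<in>F. 0 \<le> z g}" and ?neg = "{g\<in>F. z g < 0}"
  have "(\<Sum>g\<in>F. \<bar>z g\<bar>) = (\<Sum>g\<in>F. if 0 \<le> z g then z g else 0) - (\<Sum>g\<in>F. if z g < 0 then z g else 0)"
    by (subst sum_subtractf[symmetric]) (auto intro!: sum.cong)
  also have "\<dots> = (\<Sum>g\<in>?pos. z g) - (\<Sum>g\<in>?neg. z g)"
    using F by (simp add: sum.inter_filter)
  also have "\<dots> \<le> \<bar>\<Sum>g\<in>?pos. z g\<bar> + \<bar>\<Sum>g\<in>?neg. z g\<bar>" by linarith
  also have "\<dots> \<le> 2 * lp_fbl_norm (l1_embed z)"
    using abs_sum_le_fbl_norm_l1_embed[OF z, of ?pos] abs_sum_le_fbl_norm_l1_embed[OF z, of ?neg] F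
    by simp
  finally show "(\<Sum>g\<in>F. \<bar>z g\<bar>) \<le> 2 * lp_fbl_norm (l1_embed z)" .
qed

lemma l1_embed_image_closed:
  fixes u :: "nat \<Rightarrow> (('g \<Rightarrow> real) \<Rightarrow> real) \<Rightarrow> real"
  assumes u: "\<And>n. u n \<in> l1_embed ` l1" and f: "f \<in> FBL (lp p) (lp_norm p)"
    and lim: "(\<lambda>n. lp_fbl_norm (\<lambda>\<phi>. u n \<phi> - f \<phi>)) \<longlonglongrightarrow> 0"
  shows "f \<in> l1_embed ` l1"
proof -
  define X where "X n = inv_into l1 l1_embed (u n)" for n
  have X: "X n \<in> l1" and uX: "u n = l1_embed (X n)" for n
    using u by (auto simp: X_def inv_into_into f_inv_into_f)
  define \<epsilon> where "\<epsilon> n = lp_fbl_norm (\<lambda>\<phi>. u n \<phi> - f \<phi>)" for n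
  have \<epsilon>: "\<epsilon> \<longlonglongrightarrow> 0" using lim by (simp add: \<epsilon>_def[abs_def])
  have fH0: "f \<in> H0_space (lp p) (lp_norm p)" using f FBL_lp_subset_H0_space by blast
  have dH0: "(\<lambda>\<phi>. u n \<phi> - f \<phi>) \<in> H0_space (lp p) (lp_norm p)" for n
    unfolding uX by (rule H0_space_diff[OF l1_embed_in_H0_space[OF X] fH0])
  hence dbdd: "bdd_above (fbl_sums (lp p) (lp_norm p) (\<lambda>\<phi>. u n \<phi> - f \<phi>))" for n
    by (simp add: H0_space_def)
  define x where "x g = f (coord_functional g)" for g
  have "\<bar>X n g - x g\<bar> \<le> \<epsilon> n" for n g
  proof -
    have "\<bar>u n (coord_functional g) - f (coord_functional g)\<bar> \<le> \<epsilon> n"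
      unfolding \<epsilon>_def using abs_coord_functional_le
      by (intro abs_le_fbl_norm[OF dbdd coord_functional_in_dual]) (fastforce intro: order_trans)
    thus ?thesis by (simp add: uX l1_embed_coord_functional x_def)
  qed
  hence "(\<lambda>n. X n g - x g) \<longlonglongrightarrow> 0" for g
    by (intro Lim_null_comparison[OF _ \<epsilon>]) auto
  hence X_lim: "(\<lambda>n. X n g) \<longlonglongrightarrow> x g" for g by (simp add: Lim_null[of _ "x g"])
  have cauchy: "l1_norm (\<lambda>g. X n g - X m g) \<le> 2 * \<epsilon> n + 2 * \<epsilon> m" for n m
  proof -
    have "l1_embed (\<lambda>g. X n g - X m g) = (\<lambda>\<phi>. u n \<phi> - u m \<phi>)"
      by (simp add: l1_embed_diff[OF X X] uX)
    moreover have "lp_fbl_norm (\<lambda>\<phi>. u n \<phi> - u m \<phi>) \<le> 1 * \<epsilon> n + 1 * \<epsilon> m"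
      unfolding \<epsilon>_def by (rule fbl_norm_dominated(2)[OF dbdd dbdd]) auto
    ultimately show ?thesis
      using l1_norm_le_fbl_norm_l1_embed[OF l1_diff[OF X X, of n m]] by simp
  qed
  have "(\<lambda>n. 2 * \<epsilon> n) \<longlonglongrightarrow> 0" using tendsto_mult_right_zero[OF \<epsilon>] by simp
  note x_limit = l1_pointwise_limit[of X "\<lambda>n. 2 * \<epsilon> n", OF X cauchy this X_lim]
  have "lp_fbl_norm (\<lambda>\<phi>. f \<phi> - l1_embed x \<phi>) \<le> 3 * \<epsilon> n" for n
  proof -
    have diff: "(\<lambda>g. X n g - x g) \<in> l1" by (rule l1_diff[OF X x_limit(1)])
    have "lp_fbl_norm (\<lambda>\<phi>. f \<phi> - l1_embed x \<phi>)
        \<le> 1 * \<epsilon> n + 1 * lp_fbl_norm (l1_embed (\<lambda>g. X n g - x g))"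
      unfolding \<epsilon>_def
      by (rule fbl_norm_dominated(2)[OF dbdd bdd_above_fbl_sums_l1_embed[OF diff]])
        (auto simp: l1_embed_diff[OF X x_limit(1)] uX)
    also have "\<dots> \<le> \<epsilon> n + 2 * \<epsilon> n"
      using order_trans[OF fbl_norm_l1_embed_le[OF diff] x_limit(2)] by simp
    finally show ?thesis by simp
  qed
  moreover have "(\<lambda>n. 3 * \<epsilon> n) \<longlonglongrightarrow> 0" using tendsto_mult_right_zero[OF \<epsilon>] by simp
  ultimately have "lp_fbl_norm (\<lambda>\<phi>. f \<phi> - l1_embed x \<phi>) \<le> 0"
    by (intro LIMSEQ_le_const[where X = "\<lambda>n. 3 * \<epsilon> n"]) auto
  hence "(\<lambda>\<phi>. f \<phi> - l1_embed x \<phi>) = (\<lambda>_. 0)"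
    using H0_space_zero_if_fbl_norm_le_0[OF lp_norm_nonneg H0_space_diff[OF fH0 l1_embed_in_H0_space]]
      x_limit(1) by blast
  hence "f = l1_embed x" by (simp add: fun_eq_iff)
  thus ?thesis using x_limit(1) by blast
qed

end

theorem theorem5p4:
  fixes p :: real
  assumes "1 < p" and "p \<le> 2"
  shows "\<exists>(Y :: ((('g \<Rightarrow> real) \<Rightarrow> real) \<Rightarrow> real) set) (T :: ('g \<Rightarrow> real) \<Rightarrow> (('g \<Rightarrow> real) \<Rightarrow> real) \<Rightarrow> real) c C.
     Y \<subseteq> FBL (lp p) (lp_norm p) \<and>
     (\<forall>f\<in>Y. \<forall>g\<in>Y. (\<lambda>\<phi>. f \<phi> + g \<phi>) \<in> Y) \<and>
     (\<forall>f\<in>Y. \<forall>a. (\<lambda>\<phi>. a * f \<phi>) \<in> Y) \<and>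
     (\<forall>u f. (\<forall>n. u n \<in> Y) \<longrightarrow> f \<in> FBL (lp p) (lp_norm p) \<longrightarrow>
        (\<lambda>n. fbl_norm (lp p) (lp_norm p) (\<lambda>\<phi>. u n \<phi> - f \<phi>)) \<longlonglongrightarrow> 0 \<longrightarrow> f \<in> Y) \<and>
     bij_betw T (l1 :: ('g \<Rightarrow> real) set) Y \<and>
     (\<forall>x\<in>l1. \<forall>y\<in>l1. T (\<lambda>\<gamma>. x \<gamma> + y \<gamma>) = (\<lambda>\<phi>. T x \<phi> + T y \<phi>)) \<and>
     (\<forall>x\<in>l1. \<forall>a. T (\<lambda>\<gamma>. a * x \<gamma>) = (\<lambda>\<phi>. a * T x \<phi>)) \<and>
     0 < c \<and>
     (\<forall>x\<in>l1. c * l1_norm x \<le> fbl_norm (lp p) (lp_norm p) (T x) \<and>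
              fbl_norm (lp p) (lp_norm p) (T x) \<le> C * l1_norm x)"
proof -
  interpret lp_exponent_le_2 p using assms by unfold_locales auto
  show ?thesis
  proof (rule exI[of _ "l1_embed ` l1"], rule exI[of _ l1_embed],
      rule exI[of _ "1 / 2"], rule exI[of _ 1], intro conjI)
    show "l1_embed ` l1 \<subseteq> FBL (lp p) (lp_norm p)" using l1_embed_in_FBL by blast
    show "\<forall>f\<in>l1_embed ` l1. \<forall>g\<in>l1_embed ` l1. (\<lambda>\<phi>. f \<phi> + g \<phi>) \<in> l1_embed ` l1"
      by (auto simp flip: l1_embed_add intro!: imageI l1_add)
    show "\<forall>f\<in>l1_embed ` l1. \<forall>a. (\<lambda>\<phi>. a * f \<phi>) \<in> l1_embed ` l1"
      by (auto simp flip: l1_embed_scale intro!: imageI l1_scale)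
    show "\<forall>u f. (\<forall>n. u n \<in> l1_embed ` l1) \<longrightarrow> f \<in> FBL (lp p) (lp_norm p) \<longrightarrow>
        (\<lambda>n. fbl_norm (lp p) (lp_norm p) (\<lambda>\<phi>. u n \<phi> - f \<phi>)) \<longlonglongrightarrow> 0 \<longrightarrow> f \<in> l1_embed ` l1"
      using l1_embed_image_closed by blast
    show "bij_betw l1_embed l1 (l1_embed ` l1)" by (simp add: bij_betw_def inj_on_l1_embed)
    show "\<forall>x\<in>l1. 1 / 2 * l1_norm x \<le> fbl_norm (lp p) (lp_norm p) (l1_embed x) \<and>
        fbl_norm (lp p) (lp_norm p) (l1_embed x) \<le> 1 * l1_norm x"
      using l1_norm_le_fbl_norm_l1_embed fbl_norm_l1_embed_le by fastforce
  qed (use l1_embed_add l1_embed_scale in auto)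
qed

end
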